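(* Let $g_1,\dots,g_t$ be polyexponential functions with bases $L$, let $m_1,\dots,m_t$ be positive integers, and let $S$ be the least common multiple of $m_1,\dots,m_t$. Then the weighted convolution $(g_1\ast\cdots\ast g_t)_{\vec m}$, $\vec m=(m_1,\dots,m_t)$, is a mod-$S$ polyexponential whose bases lie in $\bigcup_{i=1}^tL^{S/m_i}$, where $L^{S/m_i}=\{\ell^{S/m_i}:\ell\in L\}$.
   Context: A function on nonnegative integers is polyexponential with bases $L$ (finite subset of $\mathbb C$) if it equals $\sum_{\ell\in L}p_\ell(k)\ell^k$ with polynomials $p_\ell$. The weighted convolution is $(g_1\ast\cdots\ast g_t)_{\vec m}(k)=\sum g_1(k_1)\cdots g_t(k_t)$ over all nonnegative integer vectors with $\sum_im_ik_i=k$. For a positive integer $S$, a function $g$ on nonnegative integers is a mod-$S$ polyexponential of base $\ell$ if there are an integer $K$ and functions $p_0,\dots,p_{S-1}$, each of the form (polynomial in $k$)$\cdot\ell^k$, with $g(k)=p_i((k-i)/S)$ whenever $k\ge K$ and $k\equiv i\pmod S$. A mod-$S$ polyexponential is a finite sum of mod-$S$ polyexponentials of various bases, and its bases are the bases involved in the sum. *)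

theory Defs
  imports "HOL-Analysis.Analysis" "HOL-Computational_Algebra.Polynomial"
begin

definition polyexp :: "complex set \<Rightarrow> (nat \<Rightarrow> complex) \<Rightarrow> bool" where
  "polyexp L g \<longleftrightarrow> finite L \<and>
     (\<exists>p :: complex \<Rightarrow> complex poly. \<forall>k. g k = (\<Sum>l\<in>L. poly (p l) (of_nat k) * l ^ k))"

text \<open>Weighted convolution of g_0,...,g_(t-1) with weights m_0,...,m_(t-1):
  sum over all k_0..k_(t-1) with sum m_i k_i = k of prod g_i(k_i).
  (With positive weights each k_i is at most k, so the index set is finite.)\<close>
definition wconv :: "nat \<Rightarrow> (nat \<Rightarrow> nat \<Rightarrow> complex) \<Rightarrow> (nat \<Rightarrow> nat) \<Rightarrow> nat \<Rightarrow> complex" where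
  "wconv t g m k =
     (\<Sum>ks\<in>{ks \<in> {..<t} \<rightarrow>\<^sub>E {..k}. (\<Sum>i<t. m i * ks i) = k}. \<Prod>i<t. g i (ks i))"

text \<open>Mod-S polyexponential of base l: there are K and p_0..p_(S-1), each of the form
  (polynomial)*l^k, with g k = p_i((k-i)/S) for k >= K, k = i mod S.  Note (k-i)/S = k div S.\<close>
definition modS_polyexp_base :: "nat \<Rightarrow> complex \<Rightarrow> (nat \<Rightarrow> complex) \<Rightarrow> bool" where
  "modS_polyexp_base S l g \<longleftrightarrow>
     (\<exists>K :: nat. \<exists>q :: nat \<Rightarrow> complex poly.
        \<forall>k\<ge>K. g k = poly (q (k mod S)) (of_nat (k div S)) * l ^ (k div S))"

definition modS_polyexp :: "nat \<Rightarrow> complex set \<Rightarrow> (nat \<Rightarrow> complex) \<Rightarrow> bool" where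
  "modS_polyexp S B g \<longleftrightarrow> finite B \<and>
     (\<exists>h :: complex \<Rightarrow> nat \<Rightarrow> complex.
        (\<forall>l\<in>B. modS_polyexp_base S l (h l)) \<and> (\<forall>k. g k = (\<Sum>l\<in>B. h l k)))"

end

(*
  Let G(X) be the generating function of a polyexponential g with bases L.  Multiplying
  p(k) l^k by (1 - l X) replaces p by its backward difference, so G(X) times a suitable
  product of powers of (1 - l X) is a polynomial.  The generating function of the weighted
  convolution is the product of the dilations G_i(X^(m_i)), and 1 - l X^(m_i) divides
  1 - l^(S/m_i) X^S; hence W(X) times a product of factors 1 - beta X^S with beta in the
  union of the L^(S/m_i) is a polynomial.  Removing one such factor at a time, the
  coefficients of W along each residue class mod S satisfy first order recurrences
  a(j+1) = beta a(j) + e(j+1), and a polynomial particular solution of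
  beta r(x+1) - b r(x) = s(x) shows that these keep the eventually polyexponential form.
*)

theory Submission
  imports Defs "HOL-Computational_Algebra.Polynomial_FPS"
begin

unbundle no vec_syntax
unbundle fps_syntax

lemma eq_or_degree_diff_less:
  fixes s q :: "'a::comm_ring poly"
  assumes "degree q \<le> degree s" "coeff q (degree s) = lead_coeff s"
  shows "s = q \<or> degree (s - q) < degree s"
proof (cases "s = q")
  case False
  then show ?thesis
    using assms by (intro disjI2 degree_less_if_less_eqI) (auto intro: degree_diff_le)
qed simp

lemma poly_surj_if_degree_reducible:
  fixes T :: "'a::comm_ring poly \<Rightarrow> 'a poly"
  assumes add: "\<And>r r'. T (r + r') = T r + T r'"
    and reduce: "\<And>s. s \<noteq> 0 \<Longrightarrow> \<exists>r. s = T r \<or> degree (s - T r) < degree s"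
  shows "\<exists>r. T r = s"
proof (induction "degree s" arbitrary: s rule: less_induct)
  case less
  show ?case
  proof (cases "s = 0")
    case True
    with add[of 0 0] show ?thesis by auto
  next
    case False
    then obtain r where "s = T r \<or> degree (s - T r) < degree s"
      using reduce by blast
    then show ?thesis
    proof
      assume "degree (s - T r) < degree s"
      with less obtain r' where "T r' = s - T r" by blast
      then have "T (r + r') = s" by (simp add: add)
      then show ?thesis ..
    qed (rule exI, rule sym)
  qed
qed

lemma pcompose_monom: "pcompose (monom c n) q = smult c (q ^ n)"
proof -
  have "pcompose ([:0, 1:] ^ n) q = q ^ n"
    by (induction n) (simp_all add: pcompose_mult pcompose_pCons pcompose_1)
  then show ?thesis by (simp add: monom_altdef pcompose_smult)
qed

lemma shift_difference_equation_solvable: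
  fixes a c :: "'a::field_char_0"
  assumes "a \<noteq> 0 \<or> c \<noteq> 0"
  shows "\<exists>r. \<forall>x. a * poly r (x + 1) - c * poly r x = poly s x"
proof -
  define T where "T r = smult a (pcompose r [:1, 1:]) - smult c r" for r
  have T_monom: "T (monom k n) = smult (a * k) ([:1, 1:] ^ n) - monom (c * k) n" for k n
    by (simp add: T_def pcompose_monom smult_monom mult.commute)
  have degree_T_monom: "degree (T (monom k d)) \<le> d" for k d
    unfolding T_monom
    by (intro degree_diff_le degree_smult_le[THEN order.trans] degree_monom_le)
       (simp add: degree_linear_power)
  \<comment> \<open>For a \<noteq> c, T preserves degrees; for a = c it is a times the forward difference and
    lowers them by one.  Either way one monomial cancels the leading term.\<close>
  have "\<exists>r. T r = s"
  proof (rule poly_surj_if_degree_reducible)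
    show "T (r + r') = T r + T r'" for r r'
      by (simp add: T_def pcompose_add smult_add_right algebra_simps)
  next
    fix u :: "'a poly"
    define n where "n = degree u"
    show "\<exists>r. u = T r \<or> degree (u - T r) < degree u"
    proof (cases "a = c")
      case False
      define r where "r = monom (lead_coeff u / (a - c)) n"
      have "coeff (T r) n = (a - c) * (lead_coeff u / (a - c))"
        by (simp add: r_def T_monom coeff_linear_power n_def left_diff_distrib diff_divide_distrib)
      also have "\<dots> = lead_coeff u"
        using False by simp
      finally have "coeff (T r) n = lead_coeff u" .
      moreover have "degree (T r) \<le> n"
        by (simp add: r_def degree_T_monom)
      ultimately show ?thesis unfolding n_def by (intro exI eq_or_degree_diff_less)
    next
      case True
      with assms have "a \<noteq> 0" by simp
      define r where "r = monom (lead_coeff u / (a * of_nat (Suc n))) (Suc n)"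
      have "degree (T r) \<le> Suc n"
        by (simp only: r_def degree_T_monom)
      moreover have "coeff (T r) (Suc n) = 0"
        using True by (simp add: r_def T_monom coeff_linear_power del: power_Suc)
      ultimately have "degree (T r) \<le> n"
        by (metis le_Suc_eq leading_coeff_0_iff degree_0 zero_le)
      moreover have "coeff (T r) n = lead_coeff u"
        using True \<open>a \<noteq> 0\<close> of_nat_neq_0[of n, where 'a='a]
        by (simp add: r_def T_monom coeff_linear_poly_power coeff_monom del: power_Suc)
      ultimately show ?thesis unfolding n_def by (intro exI eq_or_degree_diff_less)
    qed
  qed
  then obtain r where "T r = s" ..
  then have "a * poly r (x + 1) - c * poly r x = poly s x" for x
    by (auto simp: T_def poly_pcompose add.commute)
  then show ?thesis by blast
qed

definition eventually_polyexp :: "'a::comm_semiring_1 set \<Rightarrow> (nat \<Rightarrow> 'a) \<Rightarrow> bool" where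
  "eventually_polyexp U c \<longleftrightarrow> (\<exists>K q. \<forall>k\<ge>K. c k = (\<Sum>\<beta>\<in>U. poly (q \<beta>) (of_nat k) * \<beta> ^ k))"

lemma eventually_polyexp_first_order_recurrence:
  fixes b :: "'a::field_char_0"
  assumes "finite U" "b \<in> U"
    and rec: "\<And>j. c (Suc j) = b * c j + e (Suc j)"
    and "eventually_polyexp U e"
  shows "eventually_polyexp U c"
proof -
  obtain K p where e: "\<And>k. k \<ge> K \<Longrightarrow> e k = (\<Sum>\<beta>\<in>U. poly (p \<beta>) (of_nat k) * \<beta> ^ k)"
    using assms(4) unfolding eventually_polyexp_def by blast
  have "\<exists>r. \<forall>x. \<beta> * poly r (x + 1) = b * poly r x + \<beta> * poly (p \<beta>) (x + 1)" for \<beta>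
  proof (cases "\<beta> = 0")
    case False
    then show ?thesis
      using shift_difference_equation_solvable[of \<beta> b "smult \<beta> (pcompose (p \<beta>) [:1, 1:])"]
      by (simp add: poly_pcompose add.commute diff_eq_eq)
  qed (auto intro: exI[of _ 0])
  then obtain r
    where r: "\<And>\<beta> x. \<beta> * poly (r \<beta>) (x + 1) = b * poly (r \<beta>) x + \<beta> * poly (p \<beta>) (x + 1)"
    by metis
  \<comment> \<open>v is a particular solution from K on, so c - v is eventually geometric with ratio b,
    which the b-component can absorb since b \<in> U.\<close>
  define v where "v j = (\<Sum>\<beta>\<in>U. poly (r \<beta>) (of_nat j) * \<beta> ^ j)" for j
  have v_rec: "v (Suc j) = b * v j + e (Suc j)" if "j \<ge> K" for j
  proof -
    have "v (Suc j) = (\<Sum>\<beta>\<in>U. (\<beta> * poly (r \<beta>) (of_nat j + 1)) * \<beta> ^ j)"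
      by (simp add: v_def algebra_simps)
    also have "\<dots> = (\<Sum>\<beta>\<in>U. (b * poly (r \<beta>) (of_nat j) + \<beta> * poly (p \<beta>) (of_nat j + 1)) * \<beta> ^ j)"
      by (simp only: r)
    also have "\<dots> = b * v j + e (Suc j)"
      using e[of "Suc j"] that
      by (simp add: v_def sum.distrib sum_distrib_left algebra_simps)
    finally show ?thesis .
  qed
  have geometric: "c (K + i) - v (K + i) = b ^ i * (c K - v K)" for i
  proof (induction i)
    case (Suc i)
    have "c (K + Suc i) - v (K + Suc i) = b * (c (K + i) - v (K + i))"
      using rec v_rec by (simp add: algebra_simps)
    with Suc show ?case by simp
  qed simp
  define C where "C = (if b = 0 then 0 else (c K - v K) / b ^ K)"
  have homogeneous: "c k - v k = C * b ^ k" if "k > K" for k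
    using geometric[of "k - K"] that by (auto simp: C_def power_diff)
  define q where "q \<beta> = (if \<beta> = b then r \<beta> + [:C:] else r \<beta>)" for \<beta>
  have "c k = (\<Sum>\<beta>\<in>U. poly (q \<beta>) (of_nat k) * \<beta> ^ k)" if "k > K" for k
  proof -
    have "(\<Sum>\<beta>\<in>U. poly (q \<beta>) (of_nat k) * \<beta> ^ k) = v k + (\<Sum>\<beta>\<in>U. if \<beta> = b then C * b ^ k else 0)"
      unfolding v_def sum.distrib[symmetric] by (intro sum.cong) (auto simp: q_def distrib_right)
    also have "\<dots> = c k"
      using homogeneous[OF that] assms(1,2) by (simp add: diff_eq_eq add.commute)
    finally show ?thesis ..
  qed
  then show ?thesis unfolding eventually_polyexp_def by (meson Suc_le_eq)
qed

definition fps_is_poly :: "'a::zero fps \<Rightarrow> bool" where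
  "fps_is_poly F \<longleftrightarrow> (\<exists>p. F = fps_of_poly p)"

lemma fps_is_poly_fps_of_poly [intro]: "fps_is_poly (fps_of_poly p)"
  by (auto simp: fps_is_poly_def)

lemma fps_is_poly_const [intro]: "fps_is_poly (fps_const c)"
  by (metis fps_is_poly_fps_of_poly fps_of_poly_const)

lemma fps_is_poly_1 [intro]: "fps_is_poly (1 :: 'a::comm_ring_1 fps)"
  by (metis fps_is_poly_fps_of_poly fps_of_poly_1)

lemma fps_is_poly_X [intro]: "fps_is_poly (fps_X :: 'a::comm_ring_1 fps)"
  by (metis fps_is_poly_fps_of_poly fps_of_poly_fps_X)

lemma fps_is_poly_add [intro]:
  fixes F G :: "'a::comm_ring_1 fps"
  shows "fps_is_poly F \<Longrightarrow> fps_is_poly G \<Longrightarrow> fps_is_poly (F + G)"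
  unfolding fps_is_poly_def by (metis fps_of_poly_add)

lemma fps_is_poly_diff [intro]:
  fixes F G :: "'a::comm_ring_1 fps"
  shows "fps_is_poly F \<Longrightarrow> fps_is_poly G \<Longrightarrow> fps_is_poly (F - G)"
  unfolding fps_is_poly_def by (metis fps_of_poly_diff)

lemma fps_is_poly_mult [intro]:
  fixes F G :: "'a::comm_ring_1 fps"
  shows "fps_is_poly F \<Longrightarrow> fps_is_poly G \<Longrightarrow> fps_is_poly (F * G)"
  unfolding fps_is_poly_def by (metis fps_of_poly_mult)

lemma fps_is_poly_power [intro]:
  fixes F :: "'a::comm_ring_1 fps"
  shows "fps_is_poly F \<Longrightarrow> fps_is_poly (F ^ n)"
  by (induction n) (auto simp flip: fps_of_poly_1)

lemma fps_is_poly_prod [intro]: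
  fixes F :: "'i \<Rightarrow> 'a::comm_ring_1 fps"
  shows "(\<And>i. i \<in> I \<Longrightarrow> fps_is_poly (F i)) \<Longrightarrow> fps_is_poly (\<Prod>i\<in>I. F i)"
  by (induction I rule: infinite_finite_induct) (auto simp flip: fps_of_poly_1)

lemma fps_is_poly_sum [intro]:
  fixes F :: "'i \<Rightarrow> 'a::comm_ring_1 fps"
  shows "(\<And>i. i \<in> I \<Longrightarrow> fps_is_poly (F i)) \<Longrightarrow> fps_is_poly (\<Sum>i\<in>I. F i)"
  by (induction I rule: infinite_finite_induct) (auto simp flip: fps_of_poly_0)

lemma fps_is_poly_compose_X_power:
  fixes F :: "'a::idom fps"
  assumes "fps_is_poly F" "m > 0"
  shows "fps_is_poly (F oo fps_X ^ m)"
proof -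
  obtain p where "F = fps_of_poly p"
    using assms(1) by (auto simp: fps_is_poly_def)
  then have "F oo fps_X ^ m = fps_of_poly (pcompose p (monom 1 m))"
    using assms(2) by (simp add: fps_of_poly_pcompose fps_of_poly_monom')
  then show ?thesis by auto
qed

lemma fps_is_poly_nth_eventually_zero:
  assumes "fps_is_poly F"
  shows "\<exists>N. \<forall>k\<ge>N. F $ k = 0"
proof -
  obtain p where "F = fps_of_poly p"
    using assms by (auto simp: fps_is_poly_def)
  then show ?thesis by (auto intro!: exI[of _ "Suc (degree p)"] coeff_eq_0)
qed

lemma fps_nth_mult_one_minus_X_power:
  fixes A :: "'a::comm_ring_1 fps"
  shows "(A * (1 - fps_const c * fps_X ^ S)) $ k = A $ k - c * (if k < S then 0 else A $ (k - S))"
proof -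
  have "A * (1 - fps_const c * fps_X ^ S) = A - fps_const c * (A * fps_X ^ S)"
    by (simp add: right_diff_distrib mult.left_commute)
  then show ?thesis by (simp add: fps_X_power_mult_right_nth)
qed

lemma eventually_polyexp_residue_if_annihilated:
  fixes \<beta> :: "'i \<Rightarrow> 'a::field_char_0"
  assumes "finite I" "finite U" "\<beta> ` I \<subseteq> U" "S > 0"
    and "fps_is_poly (A * (\<Prod>x\<in>I. (1 - fps_const (\<beta> x) * fps_X ^ S) ^ n x))"
  shows "eventually_polyexp U (\<lambda>j. A $ (S * j + r))"
  using assms(1,3,5)
proof (induction I arbitrary: A rule: finite_induct)
  case empty
  then have "fps_is_poly A" by simp
  then obtain N where N: "\<And>k. k \<ge> N \<Longrightarrow> A $ k = 0"
    using fps_is_poly_nth_eventually_zero by blast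
  have "A $ (S * j + r) = (\<Sum>\<beta>\<in>U. poly 0 (of_nat j) * \<beta> ^ j)" if "j \<ge> N" for j
  proof -
    have "j \<le> S * j" using assms(4) by simp
    with that N[of "S * j + r"] show ?thesis by simp
  qed
  then show ?case
    unfolding eventually_polyexp_def by (intro exI[of _ N] exI[of _ "\<lambda>_. 0"]) blast
next
  case (insert x I)
  define P where "P = 1 - fps_const (\<beta> x) * fps_X ^ S"
  define R where "R = (\<Prod>x\<in>I. (1 - fps_const (\<beta> x) * fps_X ^ S) ^ n x)"
  have peel: "eventually_polyexp U (\<lambda>j. A $ (S * j + r))" if "fps_is_poly (A * P ^ k * R)" for k A
    using that
  proof (induction k arbitrary: A)
    case 0
    then show ?case
      using insert.IH insert.prems(1) unfolding R_def by simp
  next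
    case (Suc k)
    have "fps_is_poly ((A * P) * P ^ k * R)"
      using Suc.prems by (simp only: power_Suc mult_ac)
    then have "eventually_polyexp U (\<lambda>j. (A * P) $ (S * j + r))"
      by (rule Suc.IH)
    moreover have "A $ (S * Suc j + r) = \<beta> x * A $ (S * j + r) + (A * P) $ (S * Suc j + r)" for j
    proof -
      have "(A * P) $ (S * Suc j + r) = A $ (S * Suc j + r) - \<beta> x * A $ (S * j + r)"
        by (simp add: P_def fps_nth_mult_one_minus_X_power)
      then show ?thesis by simp
    qed
    moreover have "finite U" "\<beta> x \<in> U"
      using insert.prems(1) assms(2) by auto
    ultimately show ?case
      using eventually_polyexp_first_order_recurrence[of U "\<beta> x" "\<lambda>j. A $ (S * j + r)"
          "\<lambda>j. (A * P) $ (S * j + r)"]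
      by blast
  qed
  have "fps_is_poly (A * P ^ n x * R)"
    using insert.prems(2) unfolding prod.insert[OF insert.hyps] P_def R_def by (simp only: mult.assoc)
  then show ?case by (rule peel)
qed

lemma modS_polyexp_base_eventually_cong:
  assumes "modS_polyexp_base S l g" "\<forall>k\<ge>K. f k = g k"
  shows "modS_polyexp_base S l f"
proof -
  obtain K' q where "\<forall>k\<ge>K'. g k = poly (q (k mod S)) (of_nat (k div S)) * l ^ (k div S)"
    using assms(1) unfolding modS_polyexp_base_def by blast
  with assms(2) show ?thesis
    unfolding modS_polyexp_base_def by (intro exI[of _ "max K K'"] exI[of _ q]) simp
qed

lemma modS_polyexp_if_eventually_sum:
  assumes "finite U" "U \<noteq> {}"
    and "\<forall>k\<ge>K. f k = (\<Sum>\<beta>\<in>U. h \<beta> k)"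
    and "\<And>\<beta>. \<beta> \<in> U \<Longrightarrow> modS_polyexp_base S \<beta> (h \<beta>)"
  shows "modS_polyexp S U f"
proof -
  obtain b where b: "b \<in> U" using assms(2) by blast
  \<comment> \<open>The component of b also carries the finitely many values before K.\<close>
  define h' where "h' \<beta> = (if \<beta> = b then (\<lambda>k. f k - (\<Sum>\<beta>'\<in>U - {b}. h \<beta>' k)) else h \<beta>)" for \<beta>
  have "f k = (\<Sum>\<beta>\<in>U. h' \<beta> k)" for k
    using sum.remove[OF assms(1) b, of "\<lambda>\<beta>. h' \<beta> k"] by (simp add: h'_def)
  moreover have "modS_polyexp_base S \<beta> (h' \<beta>)" if "\<beta> \<in> U" for \<beta>
  proof (cases "\<beta> = b")
    case True
    have "\<forall>k\<ge>K. h' b k = h b k"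
      using assms(3) sum.remove[OF assms(1) b, of "\<lambda>\<beta>. h \<beta> _"] by (simp add: h'_def)
    with assms(4)[OF b] True show ?thesis
      by (blast intro: modS_polyexp_base_eventually_cong)
  qed (simp add: h'_def assms(4) that)
  ultimately show ?thesis
    unfolding modS_polyexp_def using assms(1) by blast
qed

lemma modS_polyexp_of_residues:
  assumes "S > 0" "finite U" "U \<noteq> {}"
    and "\<And>r. r < S \<Longrightarrow> eventually_polyexp U (\<lambda>j. f (S * j + r))"
  shows "modS_polyexp S U f"
proof -
  have "\<forall>r. \<exists>K q. r < S \<longrightarrow> (\<forall>j\<ge>K. f (S * j + r) = (\<Sum>\<beta>\<in>U. poly (q \<beta>) (of_nat j) * \<beta> ^ j))"
    using assms(4) unfolding eventually_polyexp_def by blast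
  then obtain K q where Kq: "\<And>r j. r < S \<Longrightarrow> j \<ge> K r \<Longrightarrow>
      f (S * j + r) = (\<Sum>\<beta>\<in>U. poly (q r \<beta>) (of_nat j) * \<beta> ^ j)"
    by metis
  define h where "h \<beta> k = poly (q (k mod S) \<beta>) (of_nat (k div S)) * \<beta> ^ (k div S)" for \<beta> k
  have "f k = (\<Sum>\<beta>\<in>U. h \<beta> k)" if "k \<ge> S * (\<Sum>r<S. K r)" for k
  proof -
    have "K (k mod S) \<le> (\<Sum>r<S. K r)"
      using assms(1) by (intro member_le_sum) auto
    also have "\<dots> \<le> k div S"
      using div_le_mono[OF that, of S] assms(1) by simp
    finally show ?thesis
      using Kq[of "k mod S" "k div S"] assms(1) by (simp add: h_def)
  qed
  moreover have "modS_polyexp_base S \<beta> (h \<beta>)" for \<beta>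
    unfolding modS_polyexp_base_def h_def by (intro exI[of _ 0] exI[of _ "\<lambda>i. q i \<beta>"]) simp
  ultimately show ?thesis
    using assms(2,3) modS_polyexp_if_eventually_sum by blast
qed

lemma fps_cutoff_mult: "fps_cutoff n (f * g) = fps_cutoff n (fps_cutoff n f * fps_cutoff n g)"
  by (simp add: fps_eq_iff fps_cutoff_left_mult_nth fps_cutoff_right_mult_nth)

lemma fps_cutoff_prod_cong:
  fixes F G :: "'i \<Rightarrow> 'a::comm_ring_1 fps"
  assumes "\<And>i. i \<in> I \<Longrightarrow> fps_cutoff n (F i) = fps_cutoff n (G i)"
  shows "fps_cutoff n (\<Prod>i\<in>I. F i) = fps_cutoff n (\<Prod>i\<in>I. G i)"
  using assms
proof (induction I rule: infinite_finite_induct)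
  case (insert a I)
  have "fps_cutoff n (F a * prod F I) = fps_cutoff n (fps_cutoff n (F a) * fps_cutoff n (prod F I))"
    by (rule fps_cutoff_mult)
  also have "\<dots> = fps_cutoff n (fps_cutoff n (G a) * fps_cutoff n (prod G I))"
    using insert by simp
  also have "\<dots> = fps_cutoff n (G a * prod G I)"
    by (rule fps_cutoff_mult[symmetric])
  finally show ?case
    using insert.hyps by simp
qed simp_all

lemma fps_cutoff_compose_X_power:
  fixes F :: "'a::comm_ring_1 fps"
  assumes "m > 0"
  shows "fps_cutoff (Suc k) (F oo fps_X ^ m) =
    fps_cutoff (Suc k) (\<Sum>y\<le>k. fps_const (F $ y) * fps_X ^ (m * y))"
proof (rule fps_ext)
  fix j
  have "j \<le> k \<Longrightarrow> (\<Sum>y\<in>{0..j}. F $ y * (if j = m * y then 1 else 0)) =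
      (\<Sum>y\<le>k. F $ y * (if j = m * y then 1 else 0))"
    using assms
    by (intro sum.mono_neutral_left) (auto simp: mult_le_cancel2 intro: le_trans[OF _ mult_le_mono1])
  then show "fps_cutoff (Suc k) (F oo fps_X ^ m) $ j =
      fps_cutoff (Suc k) (\<Sum>y\<le>k. fps_const (F $ y) * fps_X ^ (m * y)) $ j"
    by (simp add: fps_compose_nth fps_sum_nth power_mult[symmetric] cong: if_cong)
qed

lemma Abs_fps_wconv_eq_prod:
  assumes "\<forall>i<t. 0 < m i"
  shows "Abs_fps (wconv t g m) = (\<Prod>i<t. Abs_fps (g i) oo fps_X ^ m i)"
proof (rule fps_ext)
  fix k
  \<comment> \<open>Up to degree k the dilated series agree with the truncations T i, whose product
    expands over functions in PiE into the defining sum of wconv.\<close>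
  define T where "T i = (\<Sum>y\<le>k. fps_const (g i y) * fps_X ^ (m i * y))" for i
  have "fps_cutoff (Suc k) (\<Prod>i<t. Abs_fps (g i) oo fps_X ^ m i) = fps_cutoff (Suc k) (\<Prod>i<t. T i)"
    using assms by (intro fps_cutoff_prod_cong) (simp add: T_def fps_cutoff_compose_X_power)
  then have "(\<Prod>i<t. Abs_fps (g i) oo fps_X ^ m i) $ k = (\<Prod>i<t. T i) $ k"
    by (metis fps_cutoff_nth lessI)
  also have "(\<Prod>i<t. T i) =
      (\<Sum>ks\<in>{..<t} \<rightarrow>\<^sub>E {..k}. fps_const (\<Prod>i<t. g i (ks i)) * fps_X ^ (\<Sum>i<t. m i * ks i))"
  proof -
    have "(\<Prod>i\<in>I. fps_const (c i) * fps_X ^ e i) = fps_const (\<Prod>i\<in>I. c i) * fps_X ^ (\<Sum>i\<in>I. e i)"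
      for I :: "nat set" and c :: "nat \<Rightarrow> complex" and e
      by (induction I rule: infinite_finite_induct) (simp_all add: power_add mult_ac)
    then show ?thesis
      unfolding T_def prod_sum_PiE[OF finite_lessThan finite_atMost] by simp
  qed
  also have "(\<Sum>ks\<in>{..<t} \<rightarrow>\<^sub>E {..k}. fps_const (\<Prod>i<t. g i (ks i)) * fps_X ^ (\<Sum>i<t. m i * ks i)) $ k =
      wconv t g m k"
    unfolding wconv_def
    by (simp add: fps_sum_nth sum.inter_filter finite_PiE) (rule sum.cong; simp)
  finally show "Abs_fps (wconv t g m) $ k = (\<Prod>i<t. Abs_fps (g i) oo fps_X ^ m i) $ k"
    by simp
qed

lemma degree_diff_pcompose_shift_less:
  fixes p :: "'a::idom poly"
  assumes "degree p > 0"
  shows "degree (p - pcompose p [:-1, 1:]) < degree p"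
proof -
  let ?q = "pcompose p [:-1, 1:]"
  have "degree ?q = degree p"
    by (simp add: degree_pcompose)
  moreover have "lead_coeff ?q = lead_coeff p"
    by (subst lead_coeff_comp) simp_all
  ultimately
  have "p = ?q \<or> degree (p - ?q) < degree p"
    by (metis eq_or_degree_diff_less order_refl)
  with assms show ?thesis by auto
qed

lemma fps_polyexp_term_times_one_minus_X:
  fixes p :: "'a::comm_ring_1 poly"
  shows "Abs_fps (\<lambda>k. poly p (of_nat k) * l ^ k) * (1 - fps_const l * fps_X) =
    Abs_fps (\<lambda>k. poly (p - pcompose p [:-1, 1:]) (of_nat k) * l ^ k) + fps_const (poly p (-1))"
proof (rule fps_ext)
  fix n
  show "(Abs_fps (\<lambda>k. poly p (of_nat k) * l ^ k) * (1 - fps_const l * fps_X)) $ n =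
    (Abs_fps (\<lambda>k. poly (p - pcompose p [:-1, 1:]) (of_nat k) * l ^ k) + fps_const (poly p (-1))) $ n"
    using fps_nth_mult_one_minus_X_power[of "Abs_fps (\<lambda>k. poly p (of_nat k) * l ^ k)" l 1 n]
    by (cases n) (simp_all add: poly_pcompose algebra_simps)
qed

lemma polyexp_term_annihilated:
  fixes p :: "'a::idom poly"
  shows "\<exists>N. fps_is_poly (Abs_fps (\<lambda>k. poly p (of_nat k) * l ^ k) * (1 - fps_const l * fps_X) ^ N)"
proof (induction "degree p" arbitrary: p rule: less_induct)
  case less
  define p' where "p' = p - pcompose p [:-1, 1:]"
  show ?case
  proof (cases "degree p = 0")
    case True
    then obtain c where "p = [:c:]"
      by (metis degree_eq_zeroE)
    then have "Abs_fps (\<lambda>k. poly p (of_nat k) * l ^ k) * (1 - fps_const l * fps_X) = fps_const c"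
      unfolding fps_polyexp_term_times_one_minus_X by (simp add: fps_eq_iff)
    then show ?thesis
      by (metis fps_is_poly_const power_one_right)
  next
    case False
    then have "degree p' < degree p"
      unfolding p'_def by (intro degree_diff_pcompose_shift_less) simp
    with less obtain N
      where N: "fps_is_poly (Abs_fps (\<lambda>k. poly p' (of_nat k) * l ^ k) * (1 - fps_const l * fps_X) ^ N)"
      by blast
    have "Abs_fps (\<lambda>k. poly p (of_nat k) * l ^ k) * (1 - fps_const l * fps_X) ^ Suc N =
      Abs_fps (\<lambda>k. poly p' (of_nat k) * l ^ k) * (1 - fps_const l * fps_X) ^ N +
      fps_const (poly p (-1)) * (1 - fps_const l * fps_X) ^ N"
      by (simp only: power_Suc mult.left_commute[of _ "1 - _"] mult.assoc[symmetric]
          fps_polyexp_term_times_one_minus_X p'_def distrib_right)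
    also have "fps_is_poly \<dots>"
      by (intro fps_is_poly_add[OF N] fps_is_poly_mult fps_is_poly_power fps_is_poly_diff
          fps_is_poly_const fps_is_poly_1 fps_is_poly_X)
    finally show ?thesis ..
  qed
qed

lemma polyexp_annihilated:
  assumes "polyexp L g"
  shows "\<exists>N. fps_is_poly (Abs_fps g * (\<Prod>l\<in>L. (1 - fps_const l * fps_X) ^ N l))"
proof -
  obtain p where fin: "finite L" and g: "\<And>k. g k = (\<Sum>l\<in>L. poly (p l) (of_nat k) * l ^ k)"
    using assms unfolding polyexp_def by blast
  define E where "E l = Abs_fps (\<lambda>k. poly (p l) (of_nat k) * l ^ k)" for l
  define P where "P l = 1 - fps_const l * fps_X" for l :: complex
  have "\<forall>l. \<exists>n. fps_is_poly (E l * P l ^ n)"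
    unfolding E_def P_def using polyexp_term_annihilated by blast
  then obtain N where N: "\<And>l. fps_is_poly (E l * P l ^ N l)"
    by (metis choice)
  have "fps_is_poly (E l * (\<Prod>l'\<in>L. P l' ^ N l'))" if "l \<in> L" for l
  proof -
    have "E l * (\<Prod>l'\<in>L. P l' ^ N l') = E l * P l ^ N l * (\<Prod>l'\<in>L - {l}. P l' ^ N l')"
      using prod.remove[OF fin that, of "\<lambda>l'. P l' ^ N l'"] by (simp add: mult.assoc)
    also have "fps_is_poly \<dots>"
      unfolding P_def
      by (intro fps_is_poly_mult[OF N[unfolded P_def]] fps_is_poly_prod fps_is_poly_power
          fps_is_poly_diff fps_is_poly_mult fps_is_poly_const fps_is_poly_1 fps_is_poly_X)
    finally show ?thesis .
  qed
  moreover have "Abs_fps g = (\<Sum>l\<in>L. E l)"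
    by (rule fps_ext) (simp add: E_def g fps_sum_nth)
  ultimately have "fps_is_poly (Abs_fps g * (\<Prod>l\<in>L. P l ^ N l))"
    by (simp add: sum_distrib_right fps_is_poly_sum)
  then show ?thesis
    unfolding P_def by blast
qed

lemma polyexp_dilated_annihilated:
  assumes "polyexp L g" "m > 0"
  shows "\<exists>N. fps_is_poly ((Abs_fps g oo fps_X ^ m) *
    (\<Prod>l\<in>L. (1 - fps_const (l ^ d) * fps_X ^ (m * d)) ^ N l))"
proof -
  obtain N where N: "fps_is_poly (Abs_fps g * (\<Prod>l\<in>L. (1 - fps_const l * fps_X) ^ N l))"
    using polyexp_annihilated[OF assms(1)] by blast
  have "(Abs_fps g * (\<Prod>l\<in>L. (1 - fps_const l * fps_X) ^ N l)) oo fps_X ^ m =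
      (Abs_fps g oo fps_X ^ m) * (\<Prod>l\<in>L. (1 - fps_const l * fps_X ^ m) ^ N l)"
    using assms(2)
    by (simp add: fps_compose_mult_distrib fps_compose_prod_distrib fps_compose_sub_distrib
        flip: fps_compose_power)
  then have dilated: "fps_is_poly ((Abs_fps g oo fps_X ^ m) * (\<Prod>l\<in>L. (1 - fps_const l * fps_X ^ m) ^ N l))"
    using fps_is_poly_compose_X_power[OF N assms(2)] by simp
  define C where "C l = (\<Sum>i<d. (fps_const l * fps_X ^ m) ^ i)" for l :: complex
  have "1 - fps_const (l ^ d) * fps_X ^ (m * d) = (1 - fps_const l * fps_X ^ m) * C l" for l
    unfolding C_def one_diff_power_eq[symmetric] by (simp add: power_mult_distrib power_mult)
  then have "(Abs_fps g oo fps_X ^ m) * (\<Prod>l\<in>L. (1 - fps_const (l ^ d) * fps_X ^ (m * d)) ^ N l) =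
      (Abs_fps g oo fps_X ^ m) * (\<Prod>l\<in>L. (1 - fps_const l * fps_X ^ m) ^ N l) * (\<Prod>l\<in>L. C l ^ N l)"
    by (simp add: power_mult_distrib prod.distrib mult.assoc)
  also have "fps_is_poly \<dots>"
    unfolding C_def
    by (intro fps_is_poly_mult[OF dilated] fps_is_poly_prod fps_is_poly_power fps_is_poly_sum
        fps_is_poly_mult fps_is_poly_const fps_is_poly_X)
  finally show ?thesis by blast
qed

lemma wconv_annihilated:
  assumes "\<forall>i<t. polyexp L (g i)" "\<forall>i<t. 0 < m i" "\<forall>i<t. m i dvd S"
  shows "\<exists>n. fps_is_poly (Abs_fps (wconv t g m) *
    (\<Prod>x\<in>{..<t} \<times> L. (1 - fps_const (snd x ^ (S div m (fst x))) * fps_X ^ S) ^ n x))"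
proof -
  have "\<forall>i. \<exists>N. i < t \<longrightarrow> fps_is_poly ((Abs_fps (g i) oo fps_X ^ m i) *
      (\<Prod>l\<in>L. (1 - fps_const (l ^ (S div m i)) * fps_X ^ S) ^ N l))"
  proof
    fix i
    show "\<exists>N. i < t \<longrightarrow> fps_is_poly ((Abs_fps (g i) oo fps_X ^ m i) *
      (\<Prod>l\<in>L. (1 - fps_const (l ^ (S div m i)) * fps_X ^ S) ^ N l))"
      using polyexp_dilated_annihilated[of L "g i" "m i" "S div m i"] assms by auto
  qed
  then obtain N where N: "\<And>i. i < t \<Longrightarrow> fps_is_poly ((Abs_fps (g i) oo fps_X ^ m i) *
      (\<Prod>l\<in>L. (1 - fps_const (l ^ (S div m i)) * fps_X ^ S) ^ N i l))"
    by metis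
  have "(\<Prod>x\<in>{..<t} \<times> L. (1 - fps_const (snd x ^ (S div m (fst x))) * fps_X ^ S) ^ case_prod N x) =
      (\<Prod>i<t. \<Prod>l\<in>L. (1 - fps_const (l ^ (S div m i)) * fps_X ^ S) ^ N i l)"
    unfolding prod.cartesian_product by (intro prod.cong) auto
  then have "Abs_fps (wconv t g m) *
      (\<Prod>x\<in>{..<t} \<times> L. (1 - fps_const (snd x ^ (S div m (fst x))) * fps_X ^ S) ^ case_prod N x) =
      (\<Prod>i<t. (Abs_fps (g i) oo fps_X ^ m i) *
        (\<Prod>l\<in>L. (1 - fps_const (l ^ (S div m i)) * fps_X ^ S) ^ N i l))"
    by (simp only: Abs_fps_wconv_eq_prod[OF assms(2)] prod.distrib)
  also have "fps_is_poly \<dots>"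
    by (intro fps_is_poly_prod N) simp
  finally show ?thesis by blast
qed

theorem theorem3p22:
  fixes t :: nat and L :: "complex set" and g :: "nat \<Rightarrow> nat \<Rightarrow> complex" and m :: "nat \<Rightarrow> nat"
  assumes "0 < t"
    and "finite L"
    and "\<forall>i<t. polyexp L (g i)"
    and "\<forall>i<t. 0 < m i"
    and "S = Lcm (m ` {..<t})"
  shows "\<exists>B. B \<subseteq> (\<Union>i<t. (\<lambda>l. l ^ (S div m i)) ` L) \<and> modS_polyexp S B (wconv t g m)"
proof (cases "L = {}")
  case True
  then have "wconv t g m k = 0" for k
    using assms(1,3) unfolding wconv_def polyexp_def by (intro sum.neutral ballI prod_zero) auto
  then show ?thesis
    by (intro exI[of _ "{}"]) (simp add: modS_polyexp_def)
next
  case False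
  define U where "U = (\<Union>i<t. (\<lambda>l. l ^ (S div m i)) ` L)"
  have U: "finite U" "U \<noteq> {}"
    using assms(1,2) False by (auto simp: U_def)
  have "S > 0"
    using assms(4) unfolding assms(5) neq0_conv[symmetric] by (auto simp: Lcm_0_iff)
  have "\<forall>i<t. m i dvd S"
    unfolding assms(5) by simp
  then obtain n where "fps_is_poly (Abs_fps (wconv t g m) *
      (\<Prod>x\<in>{..<t} \<times> L. (1 - fps_const (snd x ^ (S div m (fst x))) * fps_X ^ S) ^ n x))"
    using wconv_annihilated assms(3,4) by blast
  then have "eventually_polyexp U (\<lambda>j. Abs_fps (wconv t g m) $ (S * j + r))" for r
    by (rule eventually_polyexp_residue_if_annihilated[rotated 4])
      (use assms(2) U \<open>S > 0\<close> in \<open>auto simp: U_def\<close>)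
  then have "modS_polyexp S U (wconv t g m)"
    using U \<open>S > 0\<close> by (intro modS_polyexp_of_residues) simp_all
  then show ?thesis
    unfolding U_def by blast
qed

end
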